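(* Let $M'=M[D,K]$ be a compatible minor of the weighted uncertainty matroid $\mathcal{M}$ such that $M'$ contains no non-trivial element $f$ with either (a) $w_f=L_f$ and $f$ a maximum-weight element of some circuit of $M'$, or (b) $w_f=U_f$ and $f$ a minimum-weight element of $E(M')\setminus\mathrm{span}_{M'}(B'\setminus\{f\})$ for some basis $B'$ of $M'$ containing $f$. Let $e$ be a trivial element of $M'$ such that (i) there exists a circuit $C$ of $M'$ with $e\in C$ and (ii) $e$ has maximum weight in $C$. Then $M[D\cup\{e\},K]$ is a compatible minor of $\mathcal{M}$.
   Context: A weighted uncertainty matroid $\mathcal{M}=(E,\mathcal{I},A,w)$ consists of a matroid $M=(E,\mathcal{I})$ on a finite set $E$, for each $e\in E$ a non-empty finite union $A_e$ of bounded real intervals (each open or closed), a weight $w_e\in A_e$, and a query cost $c_e\ge0$. $L_e=\inf A_e$, $U_e=\sup A_e$; $e$ is trivial if $A_e=\{w_e\}$. A minimum-weight basis (MWB) is a basis minimizing total weight. A weight assignment is $w^*$ with $w^*_e\in A_e$, consistent with $Q$ if $w^*_e=w_e$ on $Q$. $Q$ verifies an MWB $B$ if for every weight assignment consistent with $Q$, $B$ is an MWB with respect to it; a certificate for $\mathcal{M}$ is a set verifying some MWB, and $c^*$ denotes the minimum cost $\sum_{e\in Q}c_e$ of a certificate for $\mathcal{M}$. For $D,K\subseteq E$, $M[D,K]$ is the matroid obtained from $M$ by deleting $D$ and contracting $K$, ground set $E(M[D,K])=E\setminus(D\cup K)$, weights restricted. $M[D,K]$ is a compatible minor if there is a set $Q$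 of cost $c^*$ verifying an MWB $B$ of $\mathcal{M}$ with $K\subseteq B$, $D\cap B=\emptyset$. $\mathrm{span}_N(X)=\{e: r_N(X\cup\{e\})=r_N(X)\}$. *)

theory Defs
  imports Complex_Main
begin

definition matroid :: "'a set \<Rightarrow> ('a set \<Rightarrow> bool) \<Rightarrow> bool" where
  "matroid E indep \<longleftrightarrow>
     finite E \<and> (\<forall>I. indep I \<longrightarrow> I \<subseteq> E) \<and> indep {} \<and>
     (\<forall>I J. indep J \<and> I \<subseteq> J \<longrightarrow> indep I) \<and>
     (\<forall>I J. indep I \<and> indep J \<and> card I < card J \<longrightarrow> (\<exists>x\<in>J - I. indep (insert x I)))"

definition rank :: "('a set \<Rightarrow> bool) \<Rightarrow> 'a set \<Rightarrow> nat" where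
  "rank indep X = Max (card ` {I. I \<subseteq> X \<and> indep I})"

definition basis :: "'a set \<Rightarrow> ('a set \<Rightarrow> bool) \<Rightarrow> 'a set \<Rightarrow> bool" where
  "basis E indep B \<longleftrightarrow> B \<subseteq> E \<and> indep B \<and> (\<forall>x\<in>E - B. \<not> indep (insert x B))"

definition circuit :: "'a set \<Rightarrow> ('a set \<Rightarrow> bool) \<Rightarrow> 'a set \<Rightarrow> bool" where
  "circuit E indep C \<longleftrightarrow> C \<subseteq> E \<and> \<not> indep C \<and> (\<forall>C'. C' \<subset> C \<longrightarrow> indep C')"

definition span :: "'a set \<Rightarrow> ('a set \<Rightarrow> bool) \<Rightarrow> 'a set \<Rightarrow> 'a set" where
  "span E indep X = {e \<in> E. rank indep (insert e X) = rank indep X}"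

definition minor_ground :: "'a set \<Rightarrow> 'a set \<Rightarrow> 'a set \<Rightarrow> 'a set" where
  "minor_ground E D K = E - (D \<union> K)"

text \<open>Independent sets of (M / K) \ D: I avoids D and K and r(I + K) = |I| + r(K).\<close>
definition minor_indep :: "'a set \<Rightarrow> ('a set \<Rightarrow> bool) \<Rightarrow> 'a set \<Rightarrow> 'a set \<Rightarrow> 'a set \<Rightarrow> bool" where
  "minor_indep E indep D K I \<longleftrightarrow>
     I \<subseteq> E - (D \<union> K) \<and> rank indep (I \<union> K) = card I + rank indep K"

definition uncertainty_set :: "real set \<Rightarrow> bool" where
  "uncertainty_set S \<longleftrightarrow> S \<noteq> {} \<and>
     (\<exists>F. finite F \<and> S = \<Union>F \<and> (\<forall>J\<in>F. \<exists>a b. J = {a..b} \<or> J = {a<..<b}))"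

definition wum :: "'a set \<Rightarrow> ('a set \<Rightarrow> bool) \<Rightarrow> ('a \<Rightarrow> real set) \<Rightarrow> ('a \<Rightarrow> real) \<Rightarrow> ('a \<Rightarrow> real) \<Rightarrow> bool" where
  "wum E indep A w c \<longleftrightarrow> matroid E indep \<and>
     (\<forall>e\<in>E. uncertainty_set (A e) \<and> w e \<in> A e \<and> c e \<ge> 0)"

definition lower :: "('a \<Rightarrow> real set) \<Rightarrow> 'a \<Rightarrow> real" where
  "lower A e = Inf (A e)"

definition upper :: "('a \<Rightarrow> real set) \<Rightarrow> 'a \<Rightarrow> real" where
  "upper A e = Sup (A e)"

definition trivial :: "('a \<Rightarrow> real set) \<Rightarrow> ('a \<Rightarrow> real) \<Rightarrow> 'a \<Rightarrow> bool" where
  "trivial A w e \<longleftrightarrow> A e = {w e}"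

definition is_MWB :: "'a set \<Rightarrow> ('a set \<Rightarrow> bool) \<Rightarrow> ('a \<Rightarrow> real) \<Rightarrow> 'a set \<Rightarrow> bool" where
  "is_MWB E indep w B \<longleftrightarrow> basis E indep B \<and>
     (\<forall>B'. basis E indep B' \<longrightarrow> sum w B \<le> sum w B')"

definition weight_assignment :: "'a set \<Rightarrow> ('a \<Rightarrow> real set) \<Rightarrow> ('a \<Rightarrow> real) \<Rightarrow> bool" where
  "weight_assignment E A w' \<longleftrightarrow> (\<forall>e\<in>E. w' e \<in> A e)"

definition consistent :: "('a \<Rightarrow> real) \<Rightarrow> 'a set \<Rightarrow> ('a \<Rightarrow> real) \<Rightarrow> bool" where
  "consistent w Q w' \<longleftrightarrow> (\<forall>e\<in>Q. w' e = w e)"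

definition verifies :: "'a set \<Rightarrow> ('a set \<Rightarrow> bool) \<Rightarrow> ('a \<Rightarrow> real set) \<Rightarrow> ('a \<Rightarrow> real) \<Rightarrow> 'a set \<Rightarrow> 'a set \<Rightarrow> bool" where
  "verifies E indep A w Q B \<longleftrightarrow>
     (\<forall>w'. weight_assignment E A w' \<and> consistent w Q w' \<longrightarrow> is_MWB E indep w' B)"

definition certificate :: "'a set \<Rightarrow> ('a set \<Rightarrow> bool) \<Rightarrow> ('a \<Rightarrow> real set) \<Rightarrow> ('a \<Rightarrow> real) \<Rightarrow> 'a set \<Rightarrow> bool" where
  "certificate E indep A w Q \<longleftrightarrow> Q \<subseteq> E \<and> (\<exists>B. verifies E indep A w Q B)"

definition opt_cost :: "'a set \<Rightarrow> ('a set \<Rightarrow> bool) \<Rightarrow> ('a \<Rightarrow> real set) \<Rightarrow> ('a \<Rightarrow> real) \<Rightarrow> ('a \<Rightarrow> real) \<Rightarrow> real" where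
  "opt_cost E indep A w c = Min {sum c Q | Q. certificate E indep A w Q}"

definition compatible_minor :: "'a set \<Rightarrow> ('a set \<Rightarrow> bool) \<Rightarrow> ('a \<Rightarrow> real set) \<Rightarrow> ('a \<Rightarrow> real) \<Rightarrow> ('a \<Rightarrow> real) \<Rightarrow> 'a set \<Rightarrow> 'a set \<Rightarrow> bool" where
  "compatible_minor E indep A w c D K \<longleftrightarrow> D \<subseteq> E \<and> K \<subseteq> E \<and>
     (\<exists>Q B. Q \<subseteq> E \<and> sum c Q = opt_cost E indep A w c \<and> verifies E indep A w Q B \<and>
            K \<subseteq> B \<and> D \<inter> B = {})"

end

theory Submission
  imports Defs
begin

text \<open>Let \<open>Q\<close> be an optimal certificate verifying an MWB \<open>B\<close> with \<open>K \<subseteq> B\<close> and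
\<open>D \<inter> B = {}\<close>; only \<open>e \<in> B\<close> needs work. As \<open>C - e + K\<close> is independent and \<open>C + K\<close> is not,
some \<open>f \<in> C - B\<close> makes \<open>B' = B - e + f\<close> a basis. Minimality of \<open>B\<close> and maximality of \<open>w e\<close> on
\<open>C\<close> give \<open>w f = w e\<close>. If \<open>Q\<close> left the value of \<open>f\<close> open, \<open>B\<close> would have to stay minimal for
every value of \<open>f\<close> in \<open>A f\<close>, forcing \<open>w f = L f\<close> with \<open>f\<close> of maximum weight in \<open>C\<close>, which
condition (a) excludes. So every assignment consistent with \<open>Q\<close> gives \<open>B'\<close> the weight of \<open>B\<close>,
and \<open>Q\<close> verifies \<open>B'\<close>, which avoids \<open>D \<union> {e}\<close>.\<close>

lemma matroid_finite:
  assumes "matroid E indep"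
  shows "finite E"
  using assms unfolding matroid_def by (elim conjE)

lemma matroid_indep_empty:
  assumes "matroid E indep"
  shows "indep {}"
  using assms unfolding matroid_def by (elim conjE)

lemma matroid_indep_subset:
  assumes "matroid E indep" "indep I"
  shows "I \<subseteq> E"
  using assms unfolding matroid_def by blast

lemma matroid_indep_finite:
  assumes "matroid E indep" "indep I"
  shows "finite I"
  using matroid_finite[OF assms(1)] matroid_indep_subset[OF assms] by (rule finite_subset[rotated])

lemma matroid_indep_mono:
  assumes "matroid E indep" "indep J" "I \<subseteq> J"
  shows "indep I"
  using assms unfolding matroid_def by blast

lemma matroid_augment:
  assumes "matroid E indep" "indep I" "indep J" "card I < card J"
  obtains x where "x \<in> J - I" "indep (insert x I)"
proof -
  have "\<forall>I J. indep I \<and> indep J \<and> card I < card J \<longrightarrow> (\<exists>x\<in>J - I. indep (insert x I))"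
    using assms(1) unfolding matroid_def by (elim conjE)
  with assms(2-4) that show thesis by blast
qed

lemma matroid_indep_iff_rank_eq_card:
  assumes m: "matroid E indep" and XE: "X \<subseteq> E"
  shows "indep X \<longleftrightarrow> rank indep X = card X"
proof -
  have fin: "finite X" using matroid_finite[OF m] XE finite_subset by blast
  let ?S = "card ` {I. I \<subseteq> X \<and> indep I}"
  have finS: "finite ?S" using fin by simp
  have bound: "\<forall>k\<in>?S. k \<le> card X" using fin card_mono by blast
  show ?thesis
  proof
    assume "indep X"
    then have "card X \<in> ?S" by blast
    with finS bound show "rank indep X = card X" unfolding rank_def by (intro Max_eqI) auto
  next
    assume r: "rank indep X = card X"
    have "{} \<in> {I. I \<subseteq> X \<and> indep I}" using matroid_indep_empty[OF m] by blast
    with finS have "Max ?S \<in> ?S" by (intro Max_in) auto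
    then obtain I where "I \<subseteq> X" "indep I" "card I = card X" using r unfolding rank_def by auto
    with fin show "indep X" by (metis card_subset_eq)
  qed
qed

lemma minor_indep_iff_indep_Un:
  assumes m: "matroid E indep" and iK: "indep K" and I: "I \<subseteq> E - (D \<union> K)"
  shows "minor_indep E indep D K I \<longleftrightarrow> indep (I \<union> K)"
proof -
  have KE: "K \<subseteq> E" using matroid_indep_subset[OF m iK] .
  have IKE: "I \<union> K \<subseteq> E" using I KE by blast
  have "finite I" using matroid_finite[OF m] I finite_subset by blast
  then have "card (I \<union> K) = card I + card K"
    using matroid_indep_finite[OF m iK] I by (intro card_Un_disjoint) auto
  also have "card K = rank indep K" using matroid_indep_iff_rank_eq_card[OF m KE] iK by simp
  finally show ?thesis
    using I matroid_indep_iff_rank_eq_card[OF m IKE] unfolding minor_indep_def by simp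
qed

lemma basis_if_indep_card_eq:
  assumes m: "matroid E indep" and b: "basis E indep B"
    and iB': "indep B'" and card: "card B' = card B"
  shows "basis E indep B'"
proof -
  have "\<not> indep (insert x B')" if x: "x \<in> E - B'" for x
  proof
    assume ix: "indep (insert x B')"
    have "card B < card (insert x B')"
      using x card matroid_indep_finite[OF m iB'] by simp
    then obtain y where "y \<in> insert x B' - B" "indep (insert y B)"
      using matroid_augment[OF m _ ix] b unfolding basis_def by blast
    with b matroid_indep_subset[OF m ix] show False unfolding basis_def by blast
  qed
  with iB' matroid_indep_subset[OF m iB'] show ?thesis unfolding basis_def by blast
qed

text \<open>Take \<open>J\<close> independent of maximum size with \<open>I \<subseteq> J \<subseteq> I \<union> (B - {e})\<close>. If \<open>J\<close> is larger
than \<open>B - {e}\<close>, augmenting \<open>B - {e}\<close> from \<open>J\<close> adds an element of \<open>I - B\<close>; otherwise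
augmenting \<open>J\<close> from \<open>B\<close> either adds \<open>e\<close>, impossible since \<open>insert e I\<close> is dependent, or
contradicts maximality.\<close>

lemma basis_exchange_into_indep:
  assumes m: "matroid E indep" and b: "basis E indep B" and eB: "e \<in> B"
    and iI: "indep I" and dep: "\<not> indep (insert e I)"
  shows "\<exists>f\<in>I - B. indep (insert f (B - {e}))"
proof (rule ccontr)
  assume no_f: "\<not> (\<exists>f\<in>I - B. indep (insert f (B - {e})))"
  have iB: "indep B" using b unfolding basis_def by blast
  have finB: "finite B" using matroid_indep_finite[OF m iB] .
  have iB0: "indep (B - {e})" using matroid_indep_mono[OF m iB] by blast
  define Y where "Y = I \<union> (B - {e})"
  define S where "S = {J. I \<subseteq> J \<and> J \<subseteq> Y \<and> indep J}"
  have finY: "finite Y" using finB matroid_indep_finite[OF m iI] unfolding Y_def by simp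
  have "I \<in> S" using iI unfolding S_def Y_def by blast
  moreover have "\<forall>J. J \<in> S \<longrightarrow> card J < Suc (card Y)"
    using finY card_mono unfolding S_def by (auto simp: less_Suc_eq_le)
  ultimately obtain J where JS: "J \<in> S" and Jmax: "\<And>J'. J' \<in> S \<Longrightarrow> card J' \<le> card J"
    using Lattices_Big.ex_has_greatest_nat[of "\<lambda>J. J \<in> S" I card "Suc (card Y)"] by blast
  have IJ: "I \<subseteq> J" and JY: "J \<subseteq> Y" and iJ: "indep J" using JS unfolding S_def by auto
  have eI: "e \<notin> I" using dep iI insert_absorb by metis
  have "card J \<le> card (B - {e})"
  proof (rule ccontr)
    assume "\<not> card J \<le> card (B - {e})"
    then obtain x where "x \<in> J - (B - {e})" "indep (insert x (B - {e}))"
      using matroid_augment[OF m iB0 iJ] by (metis not_le)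
    with JY eI no_f show False unfolding Y_def by blast
  qed
  also have "\<dots> < card B" using finB eB by (rule card_Diff1_less)
  finally obtain x where x: "x \<in> B - J" "indep (insert x J)"
    using matroid_augment[OF m iJ iB] by blast
  show False
  proof (cases "x = e")
    case True
    then show False using matroid_indep_mono[OF m x(2)] IJ dep by blast
  next
    case False
    then have "insert x J \<in> S" using x IJ JY unfolding S_def Y_def by blast
    then show False using Jmax x matroid_indep_finite[OF m iJ]
      by (metis Suc_n_not_le_n card_insert_disjoint DiffD2)
  qed
qed

lemma minor_circuit_basis_exchange:
  assumes m: "matroid E indep" and b: "basis E indep B" and KB: "K \<subseteq> B"
    and circ: "circuit (minor_ground E D K) (minor_indep E indep D K) C"
    and eC: "e \<in> C" and eB: "e \<in> B"
  shows "\<exists>f\<in>C - B. basis E indep (insert f (B - {e}))"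
proof -
  have iB: "indep B" using b unfolding basis_def by blast
  have iK: "indep K" using matroid_indep_mono[OF m iB KB] .
  have CG: "C \<subseteq> E - (D \<union> K)" using circ unfolding circuit_def minor_ground_def by blast
  have "C - {e} \<subset> C" using eC by blast
  then have "minor_indep E indep D K (C - {e})" using circ unfolding circuit_def by blast
  then have "indep ((C - {e}) \<union> K)"
    using CG minor_indep_iff_indep_Un[OF m iK, of "C - {e}" D] by blast
  moreover have "\<not> indep (C \<union> K)"
    using circ CG minor_indep_iff_indep_Un[OF m iK, of C D] unfolding circuit_def by blast
  then have "\<not> indep (insert e ((C - {e}) \<union> K))"
    using eC by (metis Un_insert_left insert_Diff)
  ultimately obtain f where f: "f \<in> (C - {e}) \<union> K - B" "indep (insert f (B - {e}))"
    using basis_exchange_into_indep[OF m b eB] by blast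
  have fB: "f \<notin> B" and fC: "f \<in> C" using f KB by auto
  have finB: "finite B" using matroid_indep_finite[OF m iB] .
  have "card (insert f (B - {e})) = Suc (card (B - {e}))" using fB finB by simp
  also have "\<dots> = card B" using finB eB by (rule card_Suc_Diff1)
  finally have "basis E indep (insert f (B - {e}))" by (rule basis_if_indep_card_eq[OF m b f(2)])
  with fB fC show ?thesis by blast
qed

lemma uncertainty_set_bdd_below:
  assumes "uncertainty_set S"
  shows "bdd_below S"
proof -
  obtain F where F: "finite F" "S = \<Union>F" "\<forall>J\<in>F. \<exists>a b. J = {a..b} \<or> J = {a<..<b}"
    using assms unfolding uncertainty_set_def by blast
  have "\<forall>J\<in>F. bdd_below J" using F(3) by fastforce
  with F(1) have "bdd_below (\<Union>F)" by (induct rule: finite_induct) auto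
  then show ?thesis using F(2) by simp
qed

lemma sum_insert_Diff_swap:
  fixes w :: "'a \<Rightarrow> 'b::ab_group_add"
  assumes "finite B" "e \<in> B" "f \<notin> B"
  shows "sum w (insert f (B - {e})) = sum w B - w e + w f"
  using assms by (simp add: sum.remove)

lemma MWB_exchange_weight_le:
  assumes "is_MWB E indep w B" "basis E indep (insert f (B - {e}))"
    and "finite B" "e \<in> B" "f \<notin> B"
  shows "w e \<le> w f"
proof -
  have "sum w B \<le> sum w (insert f (B - {e}))" using assms(1,2) unfolding is_MWB_def by blast
  then show ?thesis using sum_insert_Diff_swap[OF assms(3-5), of w] by simp
qed

lemma verifies_is_MWB:
  assumes "wum E indep A w c" "verifies E indep A w Q B"
  shows "is_MWB E indep w B"
proof -
  have "weight_assignment E A w" using assms(1) unfolding wum_def weight_assignment_def by blast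
  moreover have "consistent w Q w" unfolding consistent_def by blast
  ultimately show ?thesis using assms(2) unfolding verifies_def by blast
qed

lemma verifies_exchange_lower_bound:
  assumes wm: "wum E indep A w c" and ver: "verifies E indep A w Q B"
    and b': "basis E indep (insert f (B - {e}))"
    and eB: "e \<in> B" and fB: "f \<notin> B" and fE: "f \<in> E" and fQ: "f \<notin> Q"
  shows "w e \<le> lower A f"
proof -
  have m: "matroid E indep" and A: "\<forall>x\<in>E. w x \<in> A x" using wm unfolding wum_def by auto
  have "basis E indep B" using verifies_is_MWB[OF wm ver] unfolding is_MWB_def by blast
  then have finB: "finite B" using matroid_indep_finite[OF m] unfolding basis_def by blast
  have "w e \<le> a" if a: "a \<in> A f" for a
  proof -
    have "weight_assignment E A (w(f := a))" using A a unfolding weight_assignment_def by simp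
    moreover have "consistent w Q (w(f := a))" using fQ unfolding consistent_def by simp
    ultimately have "is_MWB E indep (w(f := a)) B" using ver unfolding verifies_def by blast
    from MWB_exchange_weight_le[OF this b' finB eB fB] show ?thesis
      using eB fB by (auto split: if_splits)
  qed
  moreover have "A f \<noteq> {}" using A fE by blast
  ultimately show ?thesis unfolding lower_def by (intro cInf_greatest)
qed

lemma verifies_exchange:
  assumes ver: "verifies E indep A w Q B"
    and b': "basis E indep (insert f (B - {e}))"
    and finB: "finite B" and eB: "e \<in> B" and fB: "f \<notin> B" and wef: "w e = w f"
    and fixed: "\<And>w'. weight_assignment E A w' \<Longrightarrow> consistent w Q w' \<Longrightarrow>
                       w' e = w e \<and> w' f = w f"
  shows "verifies E indep A w Q (insert f (B - {e}))"
  unfolding verifies_def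
proof (intro allI impI)
  fix w' assume w': "weight_assignment E A w' \<and> consistent w Q w'"
  then have "is_MWB E indep w' B" using ver unfolding verifies_def by blast
  moreover have "w' e = w' f" using fixed w' wef by metis
  then have "sum w' (insert f (B - {e})) = sum w' B"
    using sum_insert_Diff_swap[OF finB eB fB, of w'] by simp
  ultimately show "is_MWB E indep w' (insert f (B - {e}))"
    using b' unfolding is_MWB_def by simp
qed

lemma consistent_value_fixed:
  assumes "weight_assignment E A w'" "consistent w Q w'" "f \<in> E" "trivial A w f \<or> f \<in> Q"
  shows "w' f = w f"
  using assms unfolding weight_assignment_def consistent_def trivial_def by auto

lemma verifies_minor_circuit_exchange:
  assumes wm: "wum E indep A w c" and ver: "verifies E indep A w Q B" and KB: "K \<subseteq> B"
    and no_lower_max: "\<forall>f\<in>minor_ground E D K. \<not> trivial A w f \<longrightarrow>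
           \<not> (w f = lower A f \<and>
                (\<exists>C'. circuit (minor_ground E D K) (minor_indep E indep D K) C' \<and> f \<in> C' \<and>
                      (\<forall>g\<in>C'. w g \<le> w f)))"
    and circ: "circuit (minor_ground E D K) (minor_indep E indep D K) C"
    and eC: "e \<in> C" and eB: "e \<in> B" and e_trivial: "trivial A w e"
    and emax: "\<forall>g\<in>C. w g \<le> w e"
  shows "\<exists>f\<in>C - B. verifies E indep A w Q (insert f (B - {e}))"
proof -
  have m: "matroid E indep" using wm unfolding wum_def by blast
  have mwb: "is_MWB E indep w B" using verifies_is_MWB[OF wm ver] .
  then have b: "basis E indep B" unfolding is_MWB_def by blast
  then have finB: "finite B" and eE: "e \<in> E"
    using eB matroid_indep_finite[OF m] unfolding basis_def by auto
  obtain f where fC: "f \<in> C" and fB: "f \<notin> B" and b': "basis E indep (insert f (B - {e}))"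
    using minor_circuit_basis_exchange[OF m b KB circ eC eB] by blast
  have fG: "f \<in> minor_ground E D K" using circ fC unfolding circuit_def by blast
  then have fE: "f \<in> E" unfolding minor_ground_def by blast
  have wef: "w e = w f"
    using emax fC MWB_exchange_weight_le[OF mwb b' finB eB fB] by force
  have f_fixed: "trivial A w f \<or> f \<in> Q"
  proof (rule ccontr)
    assume not_fixed: "\<not> (trivial A w f \<or> f \<in> Q)"
    have "lower A f \<le> w f"
      using wm fE uncertainty_set_bdd_below unfolding wum_def lower_def by (meson cInf_lower)
    then have "w f = lower A f"
      using verifies_exchange_lower_bound[OF wm ver b' eB fB fE] not_fixed wef by simp
    moreover have "\<forall>g\<in>C. w g \<le> w f" using emax wef by simp
    ultimately show False using no_lower_max fG not_fixed circ fC by blast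
  qed
  have "w' e = w e \<and> w' f = w f" if "weight_assignment E A w'" "consistent w Q w'" for w'
    using consistent_value_fixed[OF that eE] consistent_value_fixed[OF that fE] e_trivial f_fixed
    by blast
  then have "verifies E indep A w Q (insert f (B - {e}))"
    by (rule verifies_exchange[OF ver b' finB eB fB wef])
  with fC fB show ?thesis by blast
qed

theorem lemma21:
  fixes E D K :: "'a set" and indep :: "'a set \<Rightarrow> bool"
    and A :: "'a \<Rightarrow> real set" and w c :: "'a \<Rightarrow> real" and e :: 'a and C :: "'a set"
  assumes "wum E indep A w c"
    and "compatible_minor E indep A w c D K"
    and "\<forall>f\<in>minor_ground E D K. \<not> trivial A w f \<longrightarrow>
           \<not> ((w f = lower A f \<and>
                 (\<exists>C'. circuit (minor_ground E D K) (minor_indep E indep D K) C' \<and> f \<in> C' \<and>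
                       (\<forall>g\<in>C'. w g \<le> w f)))
              \<or> (w f = upper A f \<and>
                 (\<exists>B'. basis (minor_ground E D K) (minor_indep E indep D K) B' \<and> f \<in> B' \<and>
                       f \<in> minor_ground E D K - span (minor_ground E D K) (minor_indep E indep D K) (B' - {f}) \<and>
                       (\<forall>g\<in>minor_ground E D K - span (minor_ground E D K) (minor_indep E indep D K) (B' - {f}).
                           w f \<le> w g))))"
    and "e \<in> minor_ground E D K"
    and "trivial A w e"
    and "circuit (minor_ground E D K) (minor_indep E indep D K) C"
    and "e \<in> C"
    and "\<forall>g\<in>C. w g \<le> w e"
  shows "compatible_minor E indep A w c (D \<union> {e}) K"
proof -
  obtain Q B where DE: "D \<subseteq> E" and KE: "K \<subseteq> E" and QE: "Q \<subseteq> E"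
    and Qopt: "sum c Q = opt_cost E indep A w c" and ver: "verifies E indep A w Q B"
    and KB: "K \<subseteq> B" and DB: "D \<inter> B = {}"
    using assms(2) unfolding compatible_minor_def by blast
  have eE: "e \<in> E" and eK: "e \<notin> K" using assms(4) unfolding minor_ground_def by auto
  show ?thesis
  proof (cases "e \<in> B")
    case False
    with DE KE QE Qopt ver KB DB eE show ?thesis unfolding compatible_minor_def by blast
  next
    case True
    \<comment> \<open>only condition (a) of \<open>assms(3)\<close> is used\<close>
    obtain f where "f \<in> C - B" and ver': "verifies E indep A w Q (insert f (B - {e}))"
      using verifies_minor_circuit_exchange[OF assms(1) ver KB _ assms(6,7) True assms(5,8)] assms(3)
      by blast
    moreover have "f \<notin> D"
      using assms(6) \<open>f \<in> C - B\<close> unfolding circuit_def minor_ground_def by blast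
    ultimately have "K \<subseteq> insert f (B - {e})" "(D \<union> {e}) \<inter> insert f (B - {e}) = {}"
      using KB eK DB True by auto
    with DE KE eE QE Qopt ver' show ?thesis unfolding compatible_minor_def by blast
  qed
qed

end
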